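(* Let $n\ge2$ and consider the system \[\dot y=z^2(n+1-y)-ny,\qquad \dot z=\tfrac{n+1}{n}z(n-1+y)-(n+z^2)z.\] Let $D=\{(y,z)\in\mathbb R^2_{>0}:\tfrac{z^2(n+1)}{z^2+n}\le y<1\}$. Then $(0,0)$ is a global attractor of this system on $D$: for every initial condition $(y_0,z_0)\in D$ the solution exists for all $t\ge0$ and $(y(t),z(t))\to(0,0)$ as $t\to\infty$. *)

theory Defs
  imports "HOL-Analysis.Analysis"
begin

definition fy :: "real \<Rightarrow> real \<Rightarrow> real \<Rightarrow> real" where
  "fy n y z = z^2 * (n + 1 - y) - n * y"

definition fz :: "real \<Rightarrow> real \<Rightarrow> real \<Rightarrow> real" where
  "fz n y z = (n + 1) / n * z * (n - 1 + y) - (n + z^2) * z"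

definition regionD :: "real \<Rightarrow> (real \<times> real) set" where
  "regionD n = {(y, z). y > 0 \<and> z > 0 \<and> z^2 * (n + 1) / (z^2 + n) \<le> y \<and> y < 1}"

definition global_solution ::
  "real \<Rightarrow> real \<Rightarrow> real \<Rightarrow> (real \<Rightarrow> real) \<Rightarrow> (real \<Rightarrow> real) \<Rightarrow> bool" where
  "global_solution n y0 z0 y z \<longleftrightarrow>
     y 0 = y0 \<and> z 0 = z0 \<and>
     (\<forall>t\<ge>0. (y has_real_derivative fy n (y t) (z t)) (at t within {0..}) \<and>
             (z has_real_derivative fz n (y t) (z t)) (at t within {0..}))"

end

theory Submission
  imports Defs
begin

text \<open>
  Write psi = n y - z^2 (n + 1 - y), so that D = {0 < y < 1, 0 < z, 0 <= psi} and y' = - psi.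
  As long as y <= n + 1, both z and psi satisfy linear differential inequalities
  (z' = h z, and psi' + a psi >= 0 for an explicit rate a), so z > 0 and psi >= 0 persist,
  y decreases, and D is forward invariant. In particular solutions never leave the unit square,
  where the field is Lipschitz; this gives global existence, via Picard iteration in a Bielecki
  norm for the field truncated outside the square.
  Along a solution y decreases to some L < 1, and psi = - y' has a derivative bounded below,
  so psi tends to 0 and z tends to zeta = sqrt (n L / (n + 1 - L)). Then z' converges to
  fz n L zeta, which must therefore vanish. But (L, zeta) lies on the curve psi = 0, where the
  z-component of the field is negative unless L = 0.
\<close>

section \<open>Linear differential inequalities and limits at infinity\<close>

lemma linear_differential_inequality:
  fixes p p' a :: "real \<Rightarrow> real"
  assumes cont_p: "continuous_on {0..T} p" and cont_a: "continuous_on {0..T} a"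
    and deriv_p: "\<And>s. 0 < s \<Longrightarrow> s < T \<Longrightarrow> (p has_real_derivative p' s) (at s)"
    and ineq: "\<And>s. 0 < s \<Longrightarrow> s < T \<Longrightarrow> 0 \<le> p' s + a s * p s"
    and t: "0 \<le> t" "t \<le> T"
  shows "p 0 * exp (- integral {0..t} a) \<le> p t"
proof -
  define A where "A s = integral {0..s} a" for s
  have cont_A: "continuous_on {0..T} A"
    unfolding A_def by (intro indefinite_integral_continuous_1 integrable_continuous_interval cont_a)
  have deriv_A: "(A has_real_derivative a s) (at s)" if "0 < s" "s < T" for s
  proof -
    have "(A has_real_derivative a s) (at s within {0..T})"
      unfolding A_def by (rule integral_has_real_derivative) (use cont_a that in auto)
    then show ?thesis using that by (simp add: at_within_Icc_at)
  qed
  have "(\<lambda>s. p s * exp (A s)) 0 \<le> (\<lambda>s. p s * exp (A s)) t"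
  proof (rule DERIV_nonneg_imp_increasing_open[OF t(1)])
    fix s assume s: "0 < s" "s < t"
    have "((\<lambda>s. p s * exp (A s)) has_real_derivative (p' s + a s * p s) * exp (A s)) (at s)"
      using s t by (auto intro!: derivative_eq_intros deriv_p deriv_A simp: algebra_simps)
    then show "\<exists>d. ((\<lambda>s. p s * exp (A s)) has_real_derivative d) (at s) \<and> 0 \<le> d"
      using ineq[of s] s t by auto
  qed (use t in \<open>auto intro!: continuous_intros continuous_on_subset[OF cont_p]
                   continuous_on_subset[OF cont_A]\<close>)
  then have "p 0 \<le> p t * exp (A t)" by (simp add: A_def)
  then show ?thesis by (simp add: A_def exp_minus field_simps)
qed

lemma continuous_on_stays_in_open:
  fixes X :: "real \<Rightarrow> 'a::topological_space"
  assumes cont: "continuous_on {0..} X" and "open U"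
    and step: "\<And>T. 0 \<le> T \<Longrightarrow> (\<And>s. 0 \<le> s \<Longrightarrow> s < T \<Longrightarrow> X s \<in> U) \<Longrightarrow> X T \<in> U"
    and "0 \<le> t"
  shows "X t \<in> U"
proof (rule ccontr)
  assume "X t \<notin> U"
  define S where "S = {0..t} \<inter> X -` (- U)"
  have mem_S: "s \<in> S \<longleftrightarrow> 0 \<le> s \<and> s \<le> t \<and> X s \<notin> U" for s
    by (simp add: S_def)
  have "continuous_on {0..t} X" using cont by (rule continuous_on_subset) auto
  then have "closed S"
    unfolding S_def using \<open>open U\<close> by (intro continuous_closed_preimage) auto
  moreover have "S \<noteq> {}" using \<open>X t \<notin> U\<close> \<open>0 \<le> t\<close> mem_S by blast
  moreover have bdd: "bdd_below S" using mem_S by (intro bdd_belowI[of _ 0]) blast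
  ultimately have first_exit: "Inf S \<in> S" by (rule closed_contains_Inf[rotated -1])
  have "X s \<in> U" if "0 \<le> s" "s < Inf S" for s
  proof (rule ccontr)
    assume "X s \<notin> U"
    then have "s \<in> S" using first_exit that mem_S by force
    then have "Inf S \<le> s" by (rule cInf_lower[OF _ bdd])
    then show False using that by linarith
  qed
  then have "X (Inf S) \<in> U" using first_exit mem_S step by blast
  then show False using first_exit mem_S by blast
qed

lemma decreasing_tendsto_Inf:
  fixes f :: "real \<Rightarrow> real"
  assumes decr: "\<And>s t. 0 \<le> s \<Longrightarrow> s \<le> t \<Longrightarrow> f t \<le> f s" and bdd: "bdd_below (f ` {0..})"
  shows "(f \<longlongrightarrow> Inf (f ` {0..})) at_top"
proof (rule decreasing_tendsto)
  show "\<forall>\<^sub>F t in at_top. Inf (f ` {0..}) \<le> f t"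
    using eventually_ge_at_top[of 0] by eventually_elim (auto intro: cInf_lower[OF _ bdd])
next
  fix x assume "Inf (f ` {0..}) < x"
  then obtain t0 where t0: "0 \<le> t0" "f t0 < x" by (auto simp: cInf_less_iff[OF _ bdd])
  show "\<forall>\<^sub>F t in at_top. f t < x"
    using eventually_ge_at_top[of t0] by eventually_elim (use decr t0 in force)
qed

lemma DERIV_lower_bound_imp_diff_ge:
  fixes f f' :: "real \<Rightarrow> real"
  assumes "a \<le> b"
    and deriv: "\<And>r. a \<le> r \<Longrightarrow> r \<le> b \<Longrightarrow> (f has_real_derivative f' r) (at r)"
    and lower: "\<And>r. a < r \<Longrightarrow> r < b \<Longrightarrow> c \<le> f' r"
  shows "f a + c * (b - a) \<le> f b"
proof -
  have "(\<lambda>r. f r - c * r) a \<le> (\<lambda>r. f r - c * r) b"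
  proof (rule DERIV_nonneg_imp_increasing_open[OF \<open>a \<le> b\<close>])
    fix r assume "a < r" "r < b"
    then show "\<exists>d. ((\<lambda>r. f r - c * r) has_real_derivative d) (at r) \<and> 0 \<le> d"
      using lower[of r] by (intro exI[of _ "f' r - c * 1"]) (auto intro!: derivative_eq_intros deriv)
  next
    have "isCont f r" if "r \<in> {a..b}" for r using that by (intro DERIV_isCont[OF deriv]) auto
    then show "continuous_on {a..b} (\<lambda>r. f r - c * r)"
      by (intro continuous_intros continuous_at_imp_continuous_on) auto
  qed
  then show ?thesis by (simp add: algebra_simps)
qed

lemma primitive_drop_if_rate_large:
  fixes f f' g :: "real \<Rightarrow> real"
  assumes deriv_g: "\<And>s. t \<le> s \<Longrightarrow> (g has_real_derivative - f s) (at s)"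
    and deriv_f: "\<And>s. t \<le> s \<Longrightarrow> (f has_real_derivative f' s) (at s)"
    and lower: "\<And>s. t \<le> s \<Longrightarrow> - M \<le> f' s"
    and "0 < M" "0 < e" "e \<le> f t"
  shows "g (t + e / (2 * M)) \<le> g t - e^2 / (4 * M)"
proof -
  define r where "r = e / (2 * M)"
  have "0 < r" "M * r = e / 2" unfolding r_def using \<open>0 < M\<close> \<open>0 < e\<close> by auto
  have "e / 2 \<le> f s" if "t \<le> s" "s \<le> t + r" for s
  proof -
    have "f t + - M * (s - t) \<le> f s"
      using that deriv_f lower by (intro DERIV_lower_bound_imp_diff_ge) auto
    moreover have "M * (s - t) \<le> M * r" using \<open>0 < M\<close> that by (intro mult_left_mono) auto
    ultimately show ?thesis using \<open>e \<le> f t\<close> \<open>M * r = e / 2\<close> by linarith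
  qed
  moreover have "((\<lambda>s. - g s) has_real_derivative f s) (at s)" if "t \<le> s" for s
    using DERIV_minus[OF deriv_g[OF that]] by simp
  ultimately have "- g t + e / 2 * (t + r - t) \<le> - g (t + r)"
    using \<open>0 < r\<close> by (intro DERIV_lower_bound_imp_diff_ge) auto
  then show ?thesis using \<open>0 < M\<close> by (simp add: r_def power2_eq_square)
qed

(* A variant of Barbalat's lemma. *)
lemma tendsto_0_of_convergent_primitive:
  fixes f f' g :: "real \<Rightarrow> real"
  assumes deriv_g: "\<And>t. 0 < t \<Longrightarrow> (g has_real_derivative - f t) (at t)"
    and lim_g: "(g \<longlongrightarrow> L) at_top"
    and nonneg: "\<And>t. 0 < t \<Longrightarrow> 0 \<le> f t"
    and deriv_f: "\<And>t. 0 < t \<Longrightarrow> (f has_real_derivative f' t) (at t)"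
    and lower: "\<And>t. 0 < t \<Longrightarrow> - M \<le> f' t"
  shows "(f \<longlongrightarrow> 0) at_top"
proof (rule order_tendstoI)
  fix a :: real assume "a < 0"
  show "\<forall>\<^sub>F t in at_top. a < f t"
    using eventually_gt_at_top[of 0] by eventually_elim (use nonneg \<open>a < 0\<close> in force)
next
  fix e :: real assume "0 < e"
  define M' where "M' = max M 1"
  have "0 < M'" unfolding M'_def by simp
  have g_ge_L: "L \<le> g t" if "0 < t" for t
  proof (rule tendsto_upperbound[OF lim_g _ trivial_limit_at_top_linorder])
    have "((\<lambda>s. - g s) has_real_derivative f s) (at s)" if "t \<le> s" for s
      using DERIV_minus[OF deriv_g] that \<open>0 < t\<close> by simp
    then have decr: "g s \<le> g t" if "t \<le> s" for s
      using DERIV_lower_bound_imp_diff_ge[of t s "\<lambda>s. - g s" f 0] nonneg \<open>0 < t\<close> that by force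
    show "\<forall>\<^sub>F s in at_top. g s \<le> g t"
      using eventually_ge_at_top[of t] by (rule eventually_mono) (rule decr)
  qed
  have "\<forall>\<^sub>F t in at_top. g t < L + e^2 / (4 * M')"
    using lim_g \<open>0 < e\<close> \<open>0 < M'\<close> by (auto simp: order_tendsto_iff)
  then show "\<forall>\<^sub>F t in at_top. f t < e"
    using eventually_gt_at_top[of 0]
  proof eventually_elim
    case (elim t)
    show "f t < e"
    proof (rule ccontr)
      assume "\<not> f t < e"
      have "- M' \<le> f' s" if "t \<le> s" for s
        using lower[of s] elim that unfolding M'_def by linarith
      then have "g (t + e / (2 * M')) \<le> g t - e^2 / (4 * M')"
        using elim \<open>0 < M'\<close> \<open>0 < e\<close> \<open>\<not> f t < e\<close> deriv_f deriv_g
        by (intro primitive_drop_if_rate_large[where f = f and f' = f']) auto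
      moreover have "L \<le> g (t + e / (2 * M'))"
        using elim \<open>0 < M'\<close> \<open>0 < e\<close> by (intro g_ge_L add_pos_pos divide_pos_pos) auto
      ultimately show False using elim by linarith
    qed
  qed
qed

lemma derivative_limit_eq_0:
  fixes f f' :: "real \<Rightarrow> real"
  assumes lim_f: "(f \<longlongrightarrow> l) at_top"
    and deriv: "\<forall>\<^sub>F t in at_top. (f has_real_derivative f' t) (at t)"
    and lim_f': "(f' \<longlongrightarrow> c) at_top"
  shows "c = 0"
proof (rule ccontr)
  assume "c \<noteq> 0"
  then have e: "0 < \<bar>c\<bar> / 2" by simp
  have shift: "filterlim (\<lambda>t::real. t + 1) at_top at_top"
    using filterlim_tendsto_add_at_top[OF tendsto_const filterlim_ident, of 1] by (simp add: add.commute)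
  have lim_increment: "((\<lambda>t. f (t + 1) - f t) \<longlongrightarrow> l - l) at_top"
    by (intro tendsto_diff filterlim_compose[OF lim_f shift] lim_f)
  obtain T1 where T1: "\<And>t. T1 \<le> t \<Longrightarrow> \<bar>f (t + 1) - f t\<bar> < \<bar>c\<bar> / 2"
    using tendstoD[OF lim_increment e] by (auto simp: eventually_at_top_linorder dist_real_def)
  obtain T2 where T2: "\<And>t. T2 \<le> t \<Longrightarrow> \<bar>f' t - c\<bar> < \<bar>c\<bar> / 2"
    using tendstoD[OF lim_f' e] by (auto simp: eventually_at_top_linorder dist_real_def)
  obtain T3 where T3: "\<And>t. T3 \<le> t \<Longrightarrow> (f has_real_derivative f' t) (at t)"
    using deriv by (auto simp: eventually_at_top_linorder)
  define t where "t = max T1 (max T2 T3)"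
  obtain \<xi> where \<xi>: "t < \<xi>" "f (t + 1) - f t = f' \<xi>"
    using MVT2[of t "t + 1" f f'] T3 by (force simp: t_def)
  have "\<bar>c\<bar> \<le> \<bar>f' \<xi>\<bar> + \<bar>f' \<xi> - c\<bar>"
    using abs_triangle_ineq4[of "f' \<xi>" "f' \<xi> - c"] by simp
  moreover have "\<bar>f' \<xi>\<bar> < \<bar>c\<bar> / 2" using T1[of t] \<xi> by (simp add: t_def)
  moreover have "\<bar>f' \<xi> - c\<bar> < \<bar>c\<bar> / 2" using T2[of \<xi>] \<xi> by (simp add: t_def)
  ultimately show False by linarith
qed

lemma has_real_derivative_at_within_atLeast:
  "(f has_real_derivative D) (at t within {a..}) \<Longrightarrow> a < t \<Longrightarrow> (f has_real_derivative D) (at t)"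
  by (metis at_within_interior greaterThan_iff interior_real_atLeast)

section \<open>Global solutions of bounded Lipschitz systems\<close>

lemma integral_has_vector_derivative_atLeast:
  fixes g :: "real \<Rightarrow> 'a::banach"
  assumes "continuous_on {a..} g" "a \<le> t"
  shows "((\<lambda>u. integral {a..u} g) has_vector_derivative g t) (at t within {a..})"
proof -
  have "continuous_on {a..t + 1} g" using assms(1) by (rule continuous_on_subset) auto
  then have "((\<lambda>u. integral {a..u} g) has_vector_derivative g t) (at t within {a..t + 1})"
    using assms(2) by (intro integral_has_vector_derivative) auto
  moreover have "at t within {a..t + 1} = at t within {a..}"
    by (rule at_within_nhd[where S = "{..<t + 1}"]) auto
  ultimately show ?thesis by simp
qed

(* The argument u stands for t \<mapsto> exp (- k t) X t. In this weighted (Bielecki) norm the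
   Picard operator is a contraction on the whole half-line. For t < 0 it is frozen at its value
   at 0, so that it produces bounded continuous functions on the real line. *)
definition bielecki_picard ::
    "('a::banach \<Rightarrow> 'a) \<Rightarrow> real \<Rightarrow> 'a \<Rightarrow> (real \<Rightarrow>\<^sub>C 'a) \<Rightarrow> real \<Rightarrow> 'a" where
  "bielecki_picard G k x0 u t =
     exp (- (k * max 0 t)) *\<^sub>R (x0 + integral {0..max 0 t} (\<lambda>s. G (exp (k * s) *\<^sub>R u s)))"

lemma continuous_on_bielecki_integrand:
  fixes G :: "'a::real_normed_vector \<Rightarrow> 'b::topological_space" and u :: "real \<Rightarrow>\<^sub>C 'a"
  assumes "continuous_on UNIV G"
  shows "continuous_on S (\<lambda>s. G (exp (k * s) *\<^sub>R apply_bcontfun u s))"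
proof -
  have "continuous_on S (apply_bcontfun u)" by (rule continuous_on_apply_bcontfun)
  then show ?thesis by (intro continuous_on_compose2[OF assms] continuous_on_scaleR continuous_intros) auto
qed

lemma bielecki_picard_bcontfun:
  assumes cont: "continuous_on UNIV G" and bound: "\<And>p. norm (G p) \<le> B" and "0 < k"
  shows "bielecki_picard G k x0 u \<in> bcontfun"
proof (rule bcontfun_normI)
  define I where "I \<tau> = integral {0..\<tau>} (\<lambda>s. G (exp (k * s) *\<^sub>R apply_bcontfun u s))" for \<tau>
  have unfold: "bielecki_picard G k x0 u t = exp (- (k * max 0 t)) *\<^sub>R (x0 + I (max 0 t))" for t
    by (simp add: bielecki_picard_def I_def)
  have "continuous (at \<tau> within {0..}) I" if "0 \<le> \<tau>" for \<tau>
    unfolding I_def using that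
    by (intro integral_has_vector_derivative_atLeast[THEN has_vector_derivative_continuous]
        continuous_on_bielecki_integrand cont)
  then have "continuous_on {0..} I" by (simp add: continuous_on_eq_continuous_within)
  then have "continuous_on UNIV (\<lambda>t. I (max 0 t))"
    by (rule continuous_on_compose2) (auto intro: continuous_intros)
  then show "continuous_on UNIV (bielecki_picard G k x0 u)"
    unfolding unfold by (intro continuous_intros)
  fix t :: real
  define \<tau> where "\<tau> = max 0 t"
  have "0 \<le> \<tau>" by (simp add: \<tau>_def)
  have "0 \<le> B" by (rule order_trans[OF norm_ge_zero bound])
  have "k * \<tau> \<le> exp (k * \<tau>)" using exp_ge_add_one_self[of "k * \<tau>"] by linarith
  then have decay: "exp (- (k * \<tau>)) * \<tau> \<le> 1 / k"
    using \<open>0 < k\<close> by (simp add: exp_minus field_simps)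
  have "norm (I \<tau>) \<le> integral {0..\<tau>} (\<lambda>_. B)"
    unfolding I_def using bound
    by (intro integral_norm_bound_integral integrable_continuous_interval
        continuous_on_bielecki_integrand cont continuous_on_const)
  then have "norm (x0 + I \<tau>) \<le> norm x0 + B * \<tau>"
    using norm_triangle_ineq[of x0 "I \<tau>"] \<open>0 \<le> \<tau>\<close> by (simp add: mult.commute)
  then have "norm (bielecki_picard G k x0 u t) \<le> exp (- (k * \<tau>)) * (norm x0 + B * \<tau>)"
    by (simp add: unfold \<tau>_def[symmetric])
  also have "\<dots> = exp (- (k * \<tau>)) * norm x0 + B * (exp (- (k * \<tau>)) * \<tau>)"
    by (simp add: algebra_simps)
  also have "\<dots> \<le> 1 * norm x0 + B * (1 / k)"
    using \<open>0 < k\<close> \<open>0 \<le> \<tau>\<close> \<open>0 \<le> B\<close> decay by (intro add_mono mult_right_mono mult_left_mono) auto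
  finally show "norm (bielecki_picard G k x0 u t) \<le> norm x0 + B / k" by simp
qed

lemma has_integral_exp_mult:
  fixes k \<tau> :: real
  assumes "0 < k" "0 \<le> \<tau>"
  shows "((\<lambda>s. exp (k * s)) has_integral (exp (k * \<tau>) - 1) / k) {0..\<tau>}"
proof -
  have "((\<lambda>s. exp (k * s)) has_integral (exp (k * \<tau>) / k - exp (k * 0) / k)) {0..\<tau>}"
    using assms by (intro fundamental_theorem_of_calculus)
      (auto intro!: derivative_eq_intros simp: has_real_derivative_iff_has_vector_derivative[symmetric])
  then show ?thesis by (simp add: diff_divide_distrib)
qed

lemma bielecki_picard_contraction:
  assumes lip: "K-lipschitz_on UNIV G" and "0 < k"
  shows "dist (bielecki_picard G k x0 u t) (bielecki_picard G k x0 v t) \<le> K / k * dist u v"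
proof -
  define \<tau> where "\<tau> = max 0 t"
  define d where "d = dist u v"
  define g where "g w = (\<lambda>s. G (exp (k * s) *\<^sub>R apply_bcontfun w s))" for w
  have "0 \<le> \<tau>" "0 \<le> d" "0 \<le> K" using lipschitz_on_nonneg[OF lip] by (auto simp: \<tau>_def d_def)
  have cont_G: "continuous_on UNIV G" by (rule lipschitz_on_continuous_on[OF lip])
  have int_g: "g w integrable_on {0..\<tau>}" for w
    unfolding g_def by (intro integrable_continuous_interval continuous_on_bielecki_integrand cont_G)
  have pointwise: "norm (g u s - g v s) \<le> K * d * exp (k * s)" for s
  proof -
    have "norm (g u s - g v s) \<le> K * dist (exp (k * s) *\<^sub>R apply_bcontfun u s) (exp (k * s) *\<^sub>R apply_bcontfun v s)"
      unfolding g_def dist_norm[symmetric] by (rule lipschitz_onD[OF lip]) auto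
    also have "\<dots> = K * (exp (k * s) * dist (apply_bcontfun u s) (apply_bcontfun v s))"
      by (simp add: dist_norm scaleR_diff_right[symmetric])
    also have "\<dots> \<le> K * (exp (k * s) * d)"
      unfolding d_def using \<open>0 \<le> K\<close> by (intro mult_left_mono dist_bounded) auto
    finally show ?thesis by (simp add: algebra_simps)
  qed
  have exp_integral: "((\<lambda>s. K * d * exp (k * s)) has_integral K * d * ((exp (k * \<tau>) - 1) / k)) {0..\<tau>}"
    using has_integral_mult_right[OF has_integral_exp_mult[OF \<open>0 < k\<close> \<open>0 \<le> \<tau>\<close>]] by simp
  have "norm (integral {0..\<tau>} (g u) - integral {0..\<tau>} (g v)) \<le> K * d * (exp (k * \<tau>) - 1) / k"
    unfolding integral_diff[OF int_g int_g, symmetric]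
    using integral_norm_bound_integral[OF integrable_diff[OF int_g int_g] has_integral_integrable[OF exp_integral]]
      integral_unique[OF exp_integral] pointwise by auto
  then have "exp (- (k * \<tau>)) * norm (integral {0..\<tau>} (g u) - integral {0..\<tau>} (g v))
      \<le> exp (- (k * \<tau>)) * (K * d * (exp (k * \<tau>) - 1) / k)"
    by (rule mult_left_mono) simp
  also have "\<dots> = K / k * d * (1 - exp (- (k * \<tau>)))"
    using \<open>0 < k\<close> by (simp add: field_simps exp_minus)
  also have "\<dots> \<le> K / k * d"
    using \<open>0 < k\<close> \<open>0 \<le> K\<close> \<open>0 \<le> d\<close> by (intro mult_left_le) auto
  also have "exp (- (k * \<tau>)) * norm (integral {0..\<tau>} (g u) - integral {0..\<tau>} (g v))
      = dist (bielecki_picard G k x0 u t) (bielecki_picard G k x0 v t)"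
    unfolding bielecki_picard_def dist_norm \<tau>_def[symmetric] g_def
    by (simp add: scaleR_diff_right[symmetric])
  finally show ?thesis by (simp add: d_def)
qed

lemma bounded_lipschitz_ode_solution:
  fixes G :: "'a::banach \<Rightarrow> 'a"
  assumes lip: "K-lipschitz_on UNIV G" and bdd: "bounded (range G)"
  obtains X where "X 0 = x0" "\<And>t. 0 \<le> t \<Longrightarrow> (X has_vector_derivative G (X t)) (at t within {0..})"
proof -
  obtain B where B: "\<And>p. norm (G p) \<le> B" using bdd by (auto simp: bounded_iff)
  have "0 \<le> K" by (rule lipschitz_on_nonneg[OF lip])
  define k where "k = 2 * K + 1"
  have "0 < k" "K / k < 1" using \<open>0 \<le> K\<close> by (auto simp: k_def)
  have cont_G: "continuous_on UNIV G" by (rule lipschitz_on_continuous_on[OF lip])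
  define \<Phi> where "\<Phi> u = Bcontfun (bielecki_picard G k x0 u)" for u
  have apply_\<Phi>: "apply_bcontfun (\<Phi> u) = bielecki_picard G k x0 u" for u
    unfolding \<Phi>_def by (rule Bcontfun_inverse[OF bielecki_picard_bcontfun[OF cont_G B \<open>0 < k\<close>]])
  have "dist (\<Phi> u) (\<Phi> v) \<le> K / k * dist u v" for u v
    by (rule dist_bound) (unfold apply_\<Phi>, rule bielecki_picard_contraction[OF lip \<open>0 < k\<close>])
  then have "\<exists>!u. \<Phi> u = u"
    using \<open>0 \<le> K\<close> \<open>0 < k\<close> \<open>K / k < 1\<close> by (intro banach_fix_type[of "K / k"]) auto
  then obtain u where fixed: "\<Phi> u = u" by blast
  define X where "X t = x0 + integral {0..t} (\<lambda>s. G (exp (k * s) *\<^sub>R apply_bcontfun u s))" for t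
  have unscaled: "exp (k * t) *\<^sub>R apply_bcontfun u t = X t" if "0 \<le> t" for t
  proof -
    have "apply_bcontfun u t = bielecki_picard G k x0 u t" by (metis apply_\<Phi> fixed)
    also have "\<dots> = exp (- (k * t)) *\<^sub>R X t" using that by (simp add: bielecki_picard_def X_def)
    finally show ?thesis by (simp add: exp_minus)
  qed
  have "(X has_vector_derivative G (X t)) (at t within {0..})" if "0 \<le> t" for t
  proof -
    have "((\<lambda>t. integral {0..t} (\<lambda>s. G (exp (k * s) *\<^sub>R apply_bcontfun u s)))
        has_vector_derivative G (exp (k * t) *\<^sub>R apply_bcontfun u t)) (at t within {0..})"
      by (rule integral_has_vector_derivative_atLeast[OF continuous_on_bielecki_integrand[OF cont_G] that])
    from has_vector_derivative_add[OF has_vector_derivative_const this]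
    show ?thesis using unscaled[OF that] by (simp add: X_def[abs_def])
  qed
  moreover have "X 0 = x0" by (simp add: X_def)
  ultimately show ?thesis using that by blast
qed

section \<open>Lipschitz estimates\<close>

lemma lipschitz_on_mult:
  fixes f g :: "'a::metric_space \<Rightarrow> 'b::real_normed_algebra"
  assumes f: "L-lipschitz_on U f" and g: "M-lipschitz_on U g"
    and bound_f: "\<And>x. x \<in> U \<Longrightarrow> norm (f x) \<le> A" and bound_g: "\<And>x. x \<in> U \<Longrightarrow> norm (g x) \<le> B"
    and "0 \<le> A" "0 \<le> B"
  shows "(A * M + B * L)-lipschitz_on U (\<lambda>x. f x * g x)"
proof (rule lipschitz_onI)
  fix x y assume "x \<in> U" "y \<in> U"
  have "dist (f x * g x) (f y * g y) = norm (f x * (g x - g y) + (f x - f y) * g y)"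
    by (simp add: dist_norm algebra_simps)
  also have "\<dots> \<le> norm (f x) * norm (g x - g y) + norm (f x - f y) * norm (g y)"
    by (intro order_trans[OF norm_triangle_ineq] add_mono norm_mult_ineq)
  also have "\<dots> \<le> A * (M * dist x y) + (L * dist x y) * B"
    using \<open>x \<in> U\<close> \<open>y \<in> U\<close> \<open>0 \<le> A\<close> \<open>0 \<le> B\<close>
    by (intro add_mono mult_mono bound_f bound_g lipschitz_onD[OF f, unfolded dist_norm]
        lipschitz_onD[OF g, unfolded dist_norm]) (auto intro: mult_nonneg_nonneg lipschitz_on_nonneg[OF f])
  finally show "dist (f x * g x) (f y * g y) \<le> (A * M + B * L) * dist x y"
    by (simp add: algebra_simps)
next
  show "0 \<le> A * M + B * L"
    using \<open>0 \<le> A\<close> \<open>0 \<le> B\<close> lipschitz_on_nonneg[OF f] lipschitz_on_nonneg[OF g] by simp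
qed

lemma compact_lipschitz_on_mult:
  fixes f g :: "'a::metric_space \<Rightarrow> 'b::real_normed_algebra"
  assumes "compact U" and f: "L-lipschitz_on U f" and g: "M-lipschitz_on U g"
  shows "\<exists>K. K-lipschitz_on U (\<lambda>x. f x * g x)"
proof -
  have "bounded (f ` U)" "bounded (g ` U)"
    using \<open>compact U\<close> lipschitz_on_continuous_on[OF f] lipschitz_on_continuous_on[OF g]
    by (auto intro: compact_imp_bounded compact_continuous_image)
  then obtain A B where "0 < A" "\<And>x. x \<in> U \<Longrightarrow> norm (f x) \<le> A" "0 < B" "\<And>x. x \<in> U \<Longrightarrow> norm (g x) \<le> B"
    by (auto simp: bounded_pos)
  then show ?thesis using lipschitz_on_mult[OF f g] by force
qed

lemma lipschitz_on_clamp_comp: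
  fixes F :: "'a::euclidean_space \<Rightarrow> 'b::metric_space"
  assumes lip: "K-lipschitz_on (cbox a b) F"
  shows "K-lipschitz_on UNIV (\<lambda>p. F (clamp a b p))"
proof (cases "cbox a b = {}")
  case True
  then obtain i where "i \<in> Basis" "b \<bullet> i < a \<bullet> i" by (metis box_ne_empty(1) not_le)
  then have "clamp a b = (\<lambda>_. a)" by (intro clamp_empty_interval) auto
  then show ?thesis using lipschitz_on_nonneg[OF lip] by (simp add: lipschitz_on_def)
next
  case False
  then have "\<And>i. i \<in> Basis \<Longrightarrow> a \<bullet> i \<le> b \<bullet> i" by (simp add: box_ne_empty)
  show ?thesis
  proof (rule lipschitz_onI)
    fix x y :: 'a
    have "dist (F (clamp a b x)) (F (clamp a b y)) \<le> K * dist (clamp a b x) (clamp a b y)"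
      using \<open>\<And>i. i \<in> Basis \<Longrightarrow> a \<bullet> i \<le> b \<bullet> i\<close> by (intro lipschitz_onD[OF lip]) auto
    also have "\<dots> \<le> K * dist x y"
      using lipschitz_on_nonneg[OF lip] by (intro mult_left_mono dist_clamps_le_dist_args)
    finally show "dist (F (clamp a b x)) (F (clamp a b y)) \<le> K * dist x y" .
  qed (rule lipschitz_on_nonneg[OF lip])
qed

lemma bounded_range_clamp_comp:
  fixes F :: "'a::euclidean_space \<Rightarrow> 'b::metric_space"
  assumes "continuous_on (cbox a b) F" "cbox a b \<noteq> {}"
  shows "bounded (range (\<lambda>p. F (clamp a b p)))"
proof (rule bounded_subset)
  show "bounded (F ` cbox a b)"
    using assms(1) by (intro compact_imp_bounded compact_continuous_image compact_cbox)
  show "range (\<lambda>p. F (clamp a b p)) \<subseteq> F ` cbox a b"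
    using assms(2) by (auto simp: box_ne_empty)
qed

definition psi :: "real \<Rightarrow> real \<Rightarrow> real \<Rightarrow> real" where
  "psi n y z = n * y - z^2 * (n + 1 - y)"

lemma fy_eq_neg_psi: "fy n y z = - psi n y z"
  by (simp add: fy_def psi_def algebra_simps)

lemma fz_eq: "n \<noteq> 0 \<Longrightarrow> fz n y z = z * (((n + 1) * y - 1) / n - z^2)"
  by (simp add: fz_def field_simps power2_eq_square)

lemma mem_regionD_iff:
  assumes "0 < n"
  shows "(y, z) \<in> regionD n \<longleftrightarrow> 0 < y \<and> 0 < z \<and> y < 1 \<and> 0 \<le> psi n y z"
proof -
  have "0 < z^2 + n" using assms by (simp add: add_nonneg_pos)
  then have "z^2 * (n + 1) / (z^2 + n) \<le> y \<longleftrightarrow> 0 \<le> psi n y z"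
    by (simp add: divide_le_eq psi_def algebra_simps)
  then show ?thesis by (auto simp: regionD_def)
qed

lemma regionD_subset_box:
  assumes "0 < n"
  shows "regionD n \<subseteq> {0<..<1} \<times> {0<..<1}"
proof -
  have "z < 1" if "(y, z) \<in> regionD n" for y z
  proof (rule ccontr)
    assume "\<not> z < 1"
    have "y < 1" and psi: "z^2 * (n + 1 - y) \<le> n * y"
      using that mem_regionD_iff[OF assms] by (auto simp: psi_def)
    have "1 \<le> z^2" using \<open>\<not> z < 1\<close> by (simp add: one_le_power)
    then have "n + 1 - y \<le> z^2 * (n + 1 - y)"
      using mult_right_mono[of 1 "z^2" "n + 1 - y"] \<open>y < 1\<close> assms by simp
    moreover have "n * y < n" using \<open>y < 1\<close> assms by simp
    ultimately show False using psi \<open>y < 1\<close> by linarith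
  qed
  then show ?thesis using mem_regionD_iff[OF assms] by fastforce
qed

definition psi_dot :: "real \<Rightarrow> real \<Rightarrow> real \<Rightarrow> real" where
  "psi_dot n y z = n * fy n y z - 2 * z * fz n y z * (n + 1 - y) + z^2 * fy n y z"

lemma has_real_derivative_psi:
  assumes "(y has_real_derivative fy n (y t) (z t)) (at t within S)"
    and "(z has_real_derivative fz n (y t) (z t)) (at t within S)"
  shows "((\<lambda>s. psi n (y s) (z s)) has_real_derivative psi_dot n (y t) (z t)) (at t within S)"
  unfolding psi_def psi_dot_def
  by (auto intro!: derivative_eq_intros assms simp: algebra_simps)

(* Chosen so that the remainder in psi_dot_eq is nonnegative whenever y <= n + 1,
   which makes psi >= 0 forward invariant. *)
definition psi_rate :: "real \<Rightarrow> real \<Rightarrow> real \<Rightarrow> real" where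
  "psi_rate n y z = n + z^2 + 2 * z^2 * (n + 1 - y) * (n + 1) / (n * (n + z^2))"

lemma psi_dot_eq:
  assumes "0 < n"
  shows "psi_dot n y z + psi_rate n y z * psi n y z = 2 * z^2 * (n + 1 - y) * (z^2 - 1)^2 / (n + z^2)"
proof -
  have "0 < n + z^2" using assms by (simp add: add_pos_nonneg)
  have fz: "fz n y z = z * ((n + 1) * (n - 1 + y) - n * (n + z^2)) / n"
    using assms by (simp add: fz_def field_simps)
  have "psi_dot n y z * (n * (n + z^2))
      + (n * (n + z^2) * (n + z^2) + 2 * z^2 * (n + 1 - y) * (n + 1)) * psi n y z
      = 2 * z^2 * (n + 1 - y) * (z^2 - 1)^2 * n" (is "?lhs = ?rhs")
    using assms unfolding psi_dot_def fz fy_def psi_def by (simp add: field_simps) algebra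
  have d: "n * (n + z^2) \<noteq> 0" using assms \<open>0 < n + z^2\<close> by simp
  then have cancel: "2 * z^2 * (n + 1 - y) * (n + 1) / (n * (n + z^2)) * (n * (n + z^2))
      = 2 * z^2 * (n + 1 - y) * (n + 1)" by simp
  have rate: "psi_rate n y z * (n * (n + z^2)) = n * (n + z^2) * (n + z^2) + 2 * z^2 * (n + 1 - y) * (n + 1)"
    unfolding psi_rate_def distrib_right cancel by (simp add: algebra_simps)
  have "(psi_dot n y z + psi_rate n y z * psi n y z) * (n * (n + z^2)) = ?lhs"
    by (simp only: distrib_right mult.assoc[symmetric] rate[symmetric]) (simp add: algebra_simps)
  also have "\<dots> = (2 * z^2 * (n + 1 - y) * (z^2 - 1)^2 / (n + z^2)) * (n * (n + z^2))"
    using \<open>?lhs = ?rhs\<close> \<open>0 < n + z^2\<close> by simp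
  finally show ?thesis using mult_right_cancel[OF d] by blast
qed

lemma psi_dot_lower_bound:
  assumes "0 < n" "0 < y" "y < 1" "0 < z" "z < 1" "0 \<le> psi n y z"
  shows "- ((n + 1) * (n + 2)) \<le> psi_dot n y z"
proof -
  define h where "h = ((n + 1) * y - 1) / n - z^2"
  have psi_dot: "psi_dot n y z = - ((n + z^2) * psi n y z) - 2 * (z^2 * (n + 1 - y) * h)"
    using assms(1) unfolding psi_dot_def fy_def fz_def psi_def h_def
    by (simp add: field_simps power2_eq_square)
  have z2: "0 \<le> z^2" "z^2 \<le> 1" using assms by (auto simp: power_le_one)
  have "n * y \<le> n" using assms by (simp add: mult_left_le)
  moreover have "0 \<le> z^2 * (n + 1 - y)" using assms by simp
  ultimately have "psi n y z \<le> n" by (simp add: psi_def)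
  then have first: "(n + z^2) * psi n y z \<le> (n + 1) * n"
    using z2 assms by (intro mult_mono) auto
  have "(n + 1) * y - 1 \<le> n" using \<open>n * y \<le> n\<close> \<open>y < 1\<close> by (simp add: algebra_simps)
  then have "((n + 1) * y - 1) / n \<le> 1" using assms(1) by (simp add: divide_le_eq)
  then have "h \<le> 1" unfolding h_def using z2 by linarith
  then have "z^2 * (n + 1 - y) * h \<le> z^2 * (n + 1 - y)"
    using mult_left_mono[OF _ \<open>0 \<le> z^2 * (n + 1 - y)\<close>] by fastforce
  moreover have "z^2 * (n + 1 - y) \<le> 1 * (n + 1)" using z2 assms by (intro mult_mono) auto
  ultimately show ?thesis using first unfolding psi_dot by (simp add: algebra_simps)
qed

lemma fz_neg_where_psi_zero:
  assumes "0 < n" "0 \<le> y" "y < 1" "0 < z" "psi n y z = 0"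
  shows "fz n y z < 0"
proof -
  have "0 < n + 1 - y" using assms by simp
  have z2: "z^2 = n * y / (n + 1 - y)"
    using assms(5) \<open>0 < n + 1 - y\<close> by (simp add: psi_def field_simps)
  have "((n + 1) * y - 1) / n - z^2 = - ((n + 1) * (y - 1)^2) / (n * (n + 1 - y))"
    unfolding z2 using assms(1) \<open>0 < n + 1 - y\<close> by (simp add: field_simps power2_eq_square)
  also have "\<dots> < 0" using assms \<open>0 < n + 1 - y\<close> by (simp add: divide_pos_pos)
  finally show ?thesis using assms by (simp add: fz_eq mult_pos_neg)
qed

definition system_field :: "real \<Rightarrow> real \<times> real \<Rightarrow> real \<times> real" where
  "system_field n p = (fy n (fst p) (snd p), fz n (fst p) (snd p))"

lemma lipschitz_system_field: "\<exists>K. K-lipschitz_on (cbox (0, 0) (1, 1)) (system_field n)"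
proof -
  let ?U = "cbox (0::real, 0::real) (1, 1)"
  have const: "\<exists>K. K-lipschitz_on ?U (\<lambda>p. c)" for c :: real
    using lipschitz_on_constant by blast
  have fst: "\<exists>K. K-lipschitz_on ?U fst" and snd: "\<exists>K. K-lipschitz_on ?U snd"
    using dist_fst_le dist_snd_le by (auto intro!: exI[of _ 1] lipschitz_onI)
  have add: "\<exists>K. K-lipschitz_on ?U (\<lambda>p. f p + g p)"
    and diff: "\<exists>K. K-lipschitz_on ?U (\<lambda>p. f p - g p)"
    if "\<exists>L. L-lipschitz_on ?U f" "\<exists>M. M-lipschitz_on ?U g" for f g :: "real \<times> real \<Rightarrow> real"
    using that lipschitz_on_add lipschitz_on_diff by blast+
  have mult: "\<exists>K. K-lipschitz_on ?U (\<lambda>p. f p * g p)"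
    if "\<exists>L. L-lipschitz_on ?U f" "\<exists>M. M-lipschitz_on ?U g" for f g :: "real \<times> real \<Rightarrow> real"
    using that compact_lipschitz_on_mult[OF compact_cbox] by blast
  have "\<exists>K. K-lipschitz_on ?U (\<lambda>p. fy n (fst p) (snd p))"
    unfolding fy_def power2_eq_square by (intro add diff mult const fst snd)
  moreover have "\<exists>K. K-lipschitz_on ?U (\<lambda>p. fz n (fst p) (snd p))"
    unfolding fz_def power2_eq_square by (intro add diff mult const fst snd)
  ultimately obtain L M where "L-lipschitz_on ?U (\<lambda>p. fy n (fst p) (snd p))"
    "M-lipschitz_on ?U (\<lambda>p. fz n (fst p) (snd p))" by blast
  from lipschitz_on_Pair[OF this] show ?thesis
    unfolding system_field_def by blast
qed

context
  fixes n T :: real and y z :: "real \<Rightarrow> real"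
  assumes pos: "0 < n"
    and cont_y: "continuous_on {0..T} y" and cont_z: "continuous_on {0..T} z"
    and dy: "\<And>s. 0 < s \<Longrightarrow> s < T \<Longrightarrow> (y has_real_derivative fy n (y s) (z s)) (at s)"
    and dz: "\<And>s. 0 < s \<Longrightarrow> s < T \<Longrightarrow> (z has_real_derivative fz n (y s) (z s)) (at s)"
begin

lemma interval_solution_z_pos:
  assumes "0 < z 0" "0 \<le> t" "t \<le> T"
  shows "0 < z t"
proof -
  define h where "h s = ((n + 1) * y s - 1) / n - (z s)^2" for s
  have cont_h: "continuous_on {0..T} (\<lambda>s. - h s)"
    unfolding h_def using pos by (intro continuous_intros cont_y cont_z) auto
  have z_linear: "0 \<le> fz n (y s) (z s) + - h s * z s" if "0 < s" "s < T" for s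
    using pos by (simp add: fz_eq h_def algebra_simps)
  have "z 0 * exp (- integral {0..t} (\<lambda>s. - h s)) \<le> z t"
    using linear_differential_inequality[OF cont_z cont_h dz z_linear assms(2,3)] .
  moreover have "0 < z 0 * exp (- integral {0..t} (\<lambda>s. - h s))" using assms(1) by simp
  ultimately show ?thesis by linarith
qed

lemma interval_solution_psi_nonneg:
  assumes y_le: "\<And>s. 0 < s \<Longrightarrow> s < T \<Longrightarrow> y s \<le> n + 1"
    and "0 \<le> psi n (y 0) (z 0)" "0 \<le> t" "t \<le> T"
  shows "0 \<le> psi n (y t) (z t)"
proof -
  have "0 < n * (n + (z r)^2)" for r using pos by (intro mult_pos_pos add_pos_nonneg) simp_all
  then have denom: "n * (n + (z r)^2) \<noteq> 0" for r by (metis less_irrefl)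
  have cont_rate: "continuous_on {0..T} (\<lambda>s. psi_rate n (y s) (z s))"
    unfolding psi_rate_def using denom by (intro continuous_intros cont_y cont_z) auto
  have cont_psi: "continuous_on {0..T} (\<lambda>s. psi n (y s) (z s))"
    unfolding psi_def by (intro continuous_intros cont_y cont_z)
  have deriv_psi: "((\<lambda>s. psi n (y s) (z s)) has_real_derivative psi_dot n (y r) (z r)) (at r)"
    if "0 < r" "r < T" for r
    using has_real_derivative_psi[OF dy[OF that] dz[OF that]] .
  have psi_linear: "0 \<le> psi_dot n (y r) (z r) + psi_rate n (y r) (z r) * psi n (y r) (z r)"
    if "0 < r" "r < T" for r
    unfolding psi_dot_eq[OF pos] using y_le[OF that] pos by (simp add: add_pos_nonneg)
  have "psi n (y 0) (z 0) * exp (- integral {0..t} (\<lambda>s. psi_rate n (y s) (z s))) \<le> psi n (y t) (z t)"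
    using linear_differential_inequality[OF cont_psi cont_rate deriv_psi psi_linear assms(3,4)] .
  moreover have "0 \<le> psi n (y 0) (z 0) * exp (- integral {0..t} (\<lambda>s. psi_rate n (y s) (z s)))"
    using assms(2) by simp
  ultimately show ?thesis by linarith
qed

lemma regionD_invariant_on_interval:
  assumes init: "(y 0, z 0) \<in> regionD n" and y_le: "\<And>s. 0 < s \<Longrightarrow> s < T \<Longrightarrow> y s \<le> n + 1"
    and t: "0 \<le> t" "t \<le> T"
  shows "(y t, z t) \<in> regionD n"
proof -
  have "0 < z 0" "y 0 < 1" "0 \<le> psi n (y 0) (z 0)" using init mem_regionD_iff[OF pos] by auto
  have psi_nonneg: "0 \<le> psi n (y s) (z s)" if "0 \<le> s" "s \<le> T" for s
    by (rule interval_solution_psi_nonneg) (use y_le \<open>0 \<le> psi n (y 0) (z 0)\<close> that in auto)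
  have "0 < z t" by (rule interval_solution_z_pos[OF \<open>0 < z 0\<close> t])
  have "y t \<le> y 0"
  proof (rule DERIV_nonpos_imp_decreasing_open[OF t(1)])
    fix s assume "0 < s" "s < t"
    then show "\<exists>d. (y has_real_derivative d) (at s) \<and> d \<le> 0"
      using dy[of s] psi_nonneg[of s] t by (auto simp: fy_eq_neg_psi)
  qed (use t in \<open>auto intro: continuous_on_subset[OF cont_y]\<close>)
  then have "y t < 1" using \<open>y 0 < 1\<close> by linarith
  have "0 < (z t)^2 * (n + 1 - y t)" using \<open>0 < z t\<close> \<open>y t < 1\<close> pos by simp
  then have "0 < n * y t" using psi_nonneg[OF t] unfolding psi_def by linarith
  then have "0 < y t" using pos by (simp add: zero_less_mult_iff)
  then show ?thesis
    using \<open>0 < z t\<close> \<open>y t < 1\<close> psi_nonneg[OF t] mem_regionD_iff[OF pos] by blast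
qed

end

lemma regionD_forward_invariant:
  fixes y z :: "real \<Rightarrow> real" and Fy Fz :: "real \<Rightarrow> real \<Rightarrow> real"
  assumes "0 < n" and init: "(y 0, z 0) \<in> regionD n"
    and agree: "\<And>a b. 0 < a \<Longrightarrow> a < 1 \<Longrightarrow> 0 < b \<Longrightarrow> b < 1 \<Longrightarrow> Fy a b = fy n a b \<and> Fz a b = fz n a b"
    and dy: "\<And>t. 0 \<le> t \<Longrightarrow> (y has_real_derivative Fy (y t) (z t)) (at t within {0..})"
    and dz: "\<And>t. 0 \<le> t \<Longrightarrow> (z has_real_derivative Fz (y t) (z t)) (at t within {0..})"
    and "0 \<le> t"
  shows "(y t, z t) \<in> regionD n"
proof -
  have cont_y: "continuous_on {0..} y" and cont_z: "continuous_on {0..} z"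
    using dy dz by (auto simp: continuous_on_eq_continuous_within intro: DERIV_continuous)
  have up_to: "(y t, z t) \<in> regionD n"
    if box: "\<And>s. 0 \<le> s \<Longrightarrow> s < T \<Longrightarrow> (y s, z s) \<in> {0<..<1} \<times> {0<..<1}" and "0 \<le> t" "t \<le> T"
    for t T
  proof (rule regionD_invariant_on_interval[where n = n and y = y and z = z and T = T and t = t])
    show "0 < n" "(y 0, z 0) \<in> regionD n" "0 \<le> t" "t \<le> T" by fact+
    show "continuous_on {0..T} y" "continuous_on {0..T} z"
      by (auto intro: continuous_on_subset[OF cont_y] continuous_on_subset[OF cont_z])
    fix s assume s: "0 < s" "s < T"
    then have "Fy (y s) (z s) = fy n (y s) (z s) \<and> Fz (y s) (z s) = fz n (y s) (z s)"
      using box[of s] by (intro agree) auto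
    then show "(y has_real_derivative fy n (y s) (z s)) (at s)"
      "(z has_real_derivative fz n (y s) (z s)) (at s)"
      using dy[of s] dz[of s] s by (auto intro: has_real_derivative_at_within_atLeast)
    show "y s \<le> n + 1" using box[of s] s \<open>0 < n\<close> by auto
  qed
  have "(y s, z s) \<in> {0<..<1} \<times> {0<..<1}" if "0 \<le> s" for s
  proof (rule continuous_on_stays_in_open[of "\<lambda>s. (y s, z s)", OF _ _ _ that])
    show "continuous_on {0..} (\<lambda>s. (y s, z s))" by (intro continuous_intros cont_y cont_z)
    show "open ({0<..<1::real} \<times> {0<..<1::real})" by (intro open_Times open_greaterThanLessThan)
    fix T :: real assume "0 \<le> T" "\<And>s. 0 \<le> s \<Longrightarrow> s < T \<Longrightarrow> (y s, z s) \<in> {0<..<1} \<times> {0<..<1}"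
    then show "(y T, z T) \<in> {0<..<1} \<times> {0<..<1}"
      using up_to[of T T] regionD_subset_box[OF \<open>0 < n\<close>] by blast
  qed
  then show ?thesis using up_to[of t t] \<open>0 \<le> t\<close> by blast
qed

context
  fixes n y0 z0 :: real and y z :: "real \<Rightarrow> real"
  assumes pos: "0 < n" and init: "(y0, z0) \<in> regionD n" and sol: "global_solution n y0 z0 y z"
begin

lemma global_solution_has_real_derivative:
  assumes "0 < t"
  shows "(y has_real_derivative fy n (y t) (z t)) (at t)" "(z has_real_derivative fz n (y t) (z t)) (at t)"
proof -
  have "(y has_real_derivative fy n (y t) (z t)) (at t within {0..})"
    "(z has_real_derivative fz n (y t) (z t)) (at t within {0..})"
    using sol assms by (auto simp: global_solution_def)
  then show "(y has_real_derivative fy n (y t) (z t)) (at t)" "(z has_real_derivative fz n (y t) (z t)) (at t)"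
    using assms by (auto intro: has_real_derivative_at_within_atLeast)
qed

lemma global_solution_in_regionD:
  assumes "0 \<le> t"
  shows "(y t, z t) \<in> regionD n"
proof -
  have "y 0 = y0" "z 0 = z0"
    and dy: "\<And>t. 0 \<le> t \<Longrightarrow> (y has_real_derivative fy n (y t) (z t)) (at t within {0..})"
    and dz: "\<And>t. 0 \<le> t \<Longrightarrow> (z has_real_derivative fz n (y t) (z t)) (at t within {0..})"
    using sol by (auto simp: global_solution_def)
  then have "(y 0, z 0) \<in> regionD n" using init by simp
  then show ?thesis
    by (rule regionD_forward_invariant[where Fy = "fy n" and Fz = "fz n", OF pos _ _ dy dz assms]) simp
qed

lemma global_solution_bounds:
  assumes "0 \<le> t"
  shows "0 < y t" "y t < 1" "0 < z t" "z t < 1" "0 \<le> psi n (y t) (z t)"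
proof -
  have "(y t, z t) \<in> {0<..<1} \<times> {0<..<1}"
    using global_solution_in_regionD[OF assms] regionD_subset_box[OF pos] ..
  then show "0 < y t" "y t < 1" "0 < z t" "z t < 1" by auto
  show "0 \<le> psi n (y t) (z t)" using global_solution_in_regionD[OF assms] mem_regionD_iff[OF pos] by blast
qed

lemma global_solution_y_converges:
  obtains L where "0 \<le> L" "L < 1" "(y \<longlongrightarrow> L) at_top"
proof -
  have cont_y: "continuous_on {0..} y"
    using sol by (auto simp: global_solution_def continuous_on_eq_continuous_within intro: DERIV_continuous)
  have y_decr: "y t \<le> y s" if "0 \<le> s" "s \<le> t" for s t
  proof (rule DERIV_nonpos_imp_decreasing_open[OF that(2)])
    fix r assume "s < r" "r < t"
    then show "\<exists>d. (y has_real_derivative d) (at r) \<and> d \<le> 0"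
      using global_solution_has_real_derivative(1)[of r] global_solution_bounds(5)[of r] that
      by (auto simp: fy_eq_neg_psi)
  qed (use that in \<open>auto intro: continuous_on_subset[OF cont_y]\<close>)
  have bdd: "bdd_below (y ` {0..})"
    by (rule bdd_belowI[of _ 0]) (use global_solution_bounds(1) in \<open>force intro: less_imp_le\<close>)
  show ?thesis
  proof
    show "(y \<longlongrightarrow> Inf (y ` {0..})) at_top" by (rule decreasing_tendsto_Inf[OF y_decr bdd])
    show "0 \<le> Inf (y ` {0..})"
      using global_solution_bounds(1) by (intro cInf_greatest) (auto intro: less_imp_le)
    show "Inf (y ` {0..}) < 1"
      using cInf_lower[OF _ bdd, of "y 0"] global_solution_bounds(2)[of 0] by simp
  qed
qed

lemma global_solution_psi_tendsto_0: "((\<lambda>t. psi n (y t) (z t)) \<longlongrightarrow> 0) at_top"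
proof -
  obtain L where "(y \<longlongrightarrow> L) at_top" by (rule global_solution_y_converges)
  then show ?thesis
  proof (rule tendsto_0_of_convergent_primitive[rotated])
    fix t :: real assume "0 < t"
    note deriv = global_solution_has_real_derivative[OF \<open>0 < t\<close>]
    show "(y has_real_derivative - psi n (y t) (z t)) (at t)"
      using deriv(1) by (simp add: fy_eq_neg_psi)
    show "((\<lambda>t. psi n (y t) (z t)) has_real_derivative psi_dot n (y t) (z t)) (at t)"
      by (rule has_real_derivative_psi[OF deriv])
    show "- ((n + 1) * (n + 2)) \<le> psi_dot n (y t) (z t)"
      using global_solution_bounds[of t] \<open>0 < t\<close> by (intro psi_dot_lower_bound pos) auto
    show "0 \<le> psi n (y t) (z t)" using global_solution_bounds(5)[of t] \<open>0 < t\<close> by simp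
  qed
qed

lemma global_solution_z_tendsto:
  assumes lim_y: "(y \<longlongrightarrow> L) at_top" and "L < 1"
  shows "(z \<longlongrightarrow> sqrt (n * L / (n + 1 - L))) at_top"
proof (rule Lim_transform_eventually)
  have "n + 1 - L \<noteq> 0" using \<open>L < 1\<close> pos by simp
  then have "((\<lambda>t. (n * y t - psi n (y t) (z t)) / (n + 1 - y t)) \<longlongrightarrow> (n * L - 0) / (n + 1 - L)) at_top"
    by (intro tendsto_divide tendsto_diff tendsto_mult tendsto_add tendsto_const lim_y
        global_solution_psi_tendsto_0)
  from tendsto_real_sqrt[OF this]
  show "((\<lambda>t. sqrt ((n * y t - psi n (y t) (z t)) / (n + 1 - y t))) \<longlongrightarrow> sqrt (n * L / (n + 1 - L))) at_top"
    by simp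
  have "sqrt ((n * y t - psi n (y t) (z t)) / (n + 1 - y t)) = z t" if "0 \<le> t" for t
  proof -
    have "0 < n + 1 - y t" using global_solution_bounds(2)[OF that] pos by simp
    then have "(z t)^2 = (n * y t - psi n (y t) (z t)) / (n + 1 - y t)"
      by (simp add: psi_def field_simps)
    from real_sqrt_unique[OF this] show ?thesis using global_solution_bounds(3)[OF that] by simp
  qed
  then show "\<forall>\<^sub>F t in at_top. sqrt ((n * y t - psi n (y t) (z t)) / (n + 1 - y t)) = z t"
    using eventually_ge_at_top[of 0] by (rule eventually_mono[rotated])
qed

lemma global_solution_tendsto_0: "(y \<longlongrightarrow> 0) at_top \<and> (z \<longlongrightarrow> 0) at_top"
proof -
  obtain L where "0 \<le> L" "L < 1" and lim_y: "(y \<longlongrightarrow> L) at_top" by (rule global_solution_y_converges)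
  define \<zeta> where "\<zeta> = sqrt (n * L / (n + 1 - L))"
  have lim_z: "(z \<longlongrightarrow> \<zeta>) at_top" unfolding \<zeta>_def by (rule global_solution_z_tendsto[OF lim_y \<open>L < 1\<close>])
  have "fz n L \<zeta> = 0"
  proof (rule derivative_limit_eq_0[OF lim_z])
    show "\<forall>\<^sub>F t in at_top. (z has_real_derivative fz n (y t) (z t)) (at t)"
      using eventually_gt_at_top[of 0] by eventually_elim (rule global_solution_has_real_derivative(2))
    show "((\<lambda>t. fz n (y t) (z t)) \<longlongrightarrow> fz n L \<zeta>) at_top"
      unfolding fz_def by (intro tendsto_intros lim_y lim_z)
  qed
  have "L = 0"
  proof (rule ccontr)
    assume "L \<noteq> 0"
    have "0 < n + 1 - L" using \<open>L < 1\<close> pos by simp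
    then have "0 < \<zeta>" using \<open>L \<noteq> 0\<close> \<open>0 \<le> L\<close> pos by (simp add: \<zeta>_def)
    moreover have "psi n L \<zeta> = 0" using \<open>0 < n + 1 - L\<close> \<open>0 \<le> L\<close> pos by (simp add: \<zeta>_def psi_def)
    ultimately have "fz n L \<zeta> < 0" by (intro fz_neg_where_psi_zero pos \<open>0 \<le> L\<close> \<open>L < 1\<close>)
    with \<open>fz n L \<zeta> = 0\<close> show False by simp
  qed
  with lim_y lim_z show ?thesis by (simp add: \<zeta>_def)
qed

end

(* Truncating the field outside the closed unit square makes it globally Lipschitz and bounded.
   Since D lies in the open square and is forward invariant, the truncation is never active
   along solutions starting in D. *)
lemma truncated_system_solution:
  obtains X where "X 0 = x0"
    "\<And>t. 0 \<le> t \<Longrightarrow> (X has_vector_derivative system_field n (clamp (0, 0) (1, 1) (X t))) (at t within {0..})"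
proof -
  obtain K where lip: "K-lipschitz_on (cbox (0, 0) (1, 1)) (system_field n)"
    using lipschitz_system_field by blast
  have "(0, 0) \<in> cbox (0::real, 0::real) (1, 1)" by simp
  then have "bounded (range (\<lambda>p. system_field n (clamp (0, 0) (1, 1) p)))"
    by (intro bounded_range_clamp_comp lipschitz_on_continuous_on[OF lip]) blast
  with lipschitz_on_clamp_comp[OF lip] show ?thesis
    using that bounded_lipschitz_ode_solution by blast
qed

lemma global_solution_exists:
  assumes "0 < n" and init: "(y0, z0) \<in> regionD n"
  shows "\<exists>y z. global_solution n y0 z0 y z"
proof -
  define G where "G p = system_field n (clamp (0, 0) (1, 1) p)" for p
  obtain X where "X 0 = (y0, z0)"
    and dX: "\<And>t. 0 \<le> t \<Longrightarrow> (X has_vector_derivative G (X t)) (at t within {0..})"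
    unfolding G_def by (rule truncated_system_solution[of "(y0, z0)" n]) blast
  define y where "y t = fst (X t)" for t
  define z where "z t = snd (X t)" for t
  define Fy where "Fy a b = fst (G (a, b))" for a b
  define Fz where "Fz a b = snd (G (a, b))" for a b
  have dy: "(y has_real_derivative Fy (y t) (z t)) (at t within {0..})" if "0 \<le> t" for t
    using bounded_linear.has_vector_derivative[OF bounded_linear_fst dX[OF that]]
    by (simp add: has_real_derivative_iff_has_vector_derivative y_def[abs_def] z_def Fy_def)
  have dz: "(z has_real_derivative Fz (y t) (z t)) (at t within {0..})" if "0 \<le> t" for t
    using bounded_linear.has_vector_derivative[OF bounded_linear_snd dX[OF that]]
    by (simp add: has_real_derivative_iff_has_vector_derivative z_def[abs_def] y_def Fz_def)
  have agree: "Fy a b = fy n a b \<and> Fz a b = fz n a b" if "0 \<le> a" "a \<le> 1" "0 \<le> b" "b \<le> 1" for a b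
    using that by (simp add: Fy_def Fz_def G_def system_field_def)
  have "y 0 = y0" "z 0 = z0" using \<open>X 0 = (y0, z0)\<close> by (simp_all add: y_def z_def)
  then have "(y 0, z 0) \<in> regionD n" using init by simp
  then have inv: "(y t, z t) \<in> regionD n" if "0 \<le> t" for t
    using regionD_forward_invariant[where Fy = Fy and Fz = Fz, OF \<open>0 < n\<close> _ _ dy dz that] agree
    by simp
  have "global_solution n y0 z0 y z"
    unfolding global_solution_def
  proof (intro conjI allI impI)
    fix t :: real assume "0 \<le> t"
    then have "Fy (y t) (z t) = fy n (y t) (z t) \<and> Fz (y t) (z t) = fz n (y t) (z t)"
      using inv regionD_subset_box[OF \<open>0 < n\<close>] by (intro agree) fastforce+
    then show "(y has_real_derivative fy n (y t) (z t)) (at t within {0..})"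
      "(z has_real_derivative fz n (y t) (z t)) (at t within {0..})"
      using dy[OF \<open>0 \<le> t\<close>] dz[OF \<open>0 \<le> t\<close>] by simp_all
  qed fact+
  then show ?thesis by blast
qed

theorem theorem3p5:
  fixes n :: nat and y0 z0 :: real
  assumes "n \<ge> 2" and "(y0, z0) \<in> regionD (real n)"
  shows "(\<exists>y z. global_solution (real n) y0 z0 y z) \<and>
         (\<forall>y z. global_solution (real n) y0 z0 y z \<longrightarrow>
                 (y \<longlongrightarrow> 0) at_top \<and> (z \<longlongrightarrow> 0) at_top)"
proof -
  have "0 < real n" using assms(1) by simp
  then show ?thesis
    using global_solution_exists[OF _ assms(2)] global_solution_tendsto_0[OF _ assms(2)] by blast
qed

end
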